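(* Consider REFORM with the RPTSC reward scheme with at most $k=2$ pairings, in the setting and expected-reward model described in the context. Let agent $a_i$ have evaluation $x_i$ and submit report $y_i$ at time $t_i$, and write $q_{y_i}=Q_p(y_i)$, $q'_{y_i}=Q_{p|i}(y_i\mid x_i)$. Then the expected reward of $a_i$ is $$\mathbb{E}[R_i(y_i\mid x_i);k=2]=\begin{cases}\alpha\beta(t_i)\left[\frac{q'_{y_i}}{q_{y_i}}-1+r(1-q'_{y_i})\frac{q'_{y_i}}{q_{y_i}}\right]\left[1-(1-q_{y_i})^{n-1}\right], & \text{if } q_{y_i}>0,\\ 0, & \text{otherwise.}\end{cases}$$
   Context: Setting. In each round there are $n\ge 2$ statistically independent, a-priori similar tasks with a common finite answer space $\mathcal{X}$; each task is solved by at least two agents. An agent $a_i$ solving task $\tau$ obtains (if it exerts high effort) an evaluation $x_i\in\mathcal{X}$, and submits a report $y_i\in\mathcal{X}$ at time $t_i$. A decay factor $\beta(t)>0$, decreasing in $t$, multiplies all rewards. Each agent has a reputation (TERM) score $\Omega$. REFORM with RPTSC reward (parameters $\alpha>0$ and maximal number of pairings $k\ge 1$): sample $n-1$ reports, one from each task other than $\tau$, and let $f(y_i)$ be the fraction of them equal to $y_i$. Repeatedly choose a random peer $a_p$ on task $\tau$ with report $y_p$ and TERM score $\Omega_p$: if $y_i=y_p$ the reward is $\alpha\beta(t_i)(1/f(y_i)-1)$ and the procedure stops; otherwise, if $\Omega_i\le\Omega_p$ or $k$ pairings have been used, the reward is $-\alpha\beta(t_i)$ if $f(y_i)\neq 0$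 and $0$ if $f(y_i)=0$, and the procedure stops; otherwise a new peer is drawn. (For $k=1$ this is the RPTSC reward times $\beta(t_i)$.) Beliefs. $Q_p(y)$ (written $q_y$) is $a_i$'s belief that a random peer reports $y$; $Q_{p|i}(y\mid x_i)$ (written $q'_y$) is $a_i$'s belief that a random peer on the same task reports $y$ given $a_i$'s evaluation $x_i$. All beliefs are fully mixed (strictly between $0$ and $1$). $r\in[0,1]$ is $a_i$'s belief that a random peer has TERM score less than $\Omega_i$; it is the same for every peer. Expected-reward model. If $q_{y_i}>0$, let $E'=\alpha\left(\frac{q'_{y_i}}{q_{y_i}}-1\right)\left(1-(1-q_{y_i})^{n-1}\right)$ (expected RPTSC reward of a single pairing, without decay) and $M'=\alpha\left(\frac{1}{q_{y_i}}-1\right)\left(1-(1-q_{y_i})^{n-1}\right)$ (expected reward when the report matches the peer's, without decay). The expected reward is computed pairing by pairing, independently: with probability $1-r$ the peer's TERM score is not below $\Omega_i$, and the pairing is final with expected reward $\beta(t_i)E'$; the $k$-th pairing is always final with expected reward $\beta(t_i)E'$; otherwise (probability $r$, not the last pairing) with probability $q'_{y_i}$ the reports match and the reward is $\beta(t_i)M'$, and with probability $1-q'_{y_i}$ a new pairing is made. *)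

theory Defs
  imports Complex_Main
begin

text \<open>Expected RPTSC reward of a single pairing, without decay (E').\<close>
definition single_pairing_reward :: "real \<Rightarrow> real \<Rightarrow> real \<Rightarrow> nat \<Rightarrow> real" where
  "single_pairing_reward \<alpha> q q' n = \<alpha> * (q' / q - 1) * (1 - (1 - q) ^ (n - 1))"

text \<open>Expected reward when the report matches the peer's, without decay (M').\<close>
definition match_reward :: "real \<Rightarrow> real \<Rightarrow> nat \<Rightarrow> real" where
  "match_reward \<alpha> q n = \<alpha> * (1 / q - 1) * (1 - (1 - q) ^ (n - 1))"

text \<open>Expected reward computed pairing by pairing, where m is the number of pairings
  still available (including the current one); b is the decay value beta(t_i).
  The last available pairing is always final with expected reward b*E'.
  Otherwise: with probability 1-r the pairing is final (reward b*E'); with probability r,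
  the reports match with probability q' (reward b*M'), and with probability 1-q'
  a new pairing is made.\<close>
fun pairing_reward :: "real \<Rightarrow> real \<Rightarrow> real \<Rightarrow> real \<Rightarrow> nat \<Rightarrow> real \<Rightarrow> nat \<Rightarrow> real" where
  "pairing_reward \<alpha> b q q' n r 0 = 0"
| "pairing_reward \<alpha> b q q' n r (Suc 0) = b * single_pairing_reward \<alpha> q q' n"
| "pairing_reward \<alpha> b q q' n r (Suc (Suc m)) =
     (1 - r) * (b * single_pairing_reward \<alpha> q q' n)
     + r * (q' * (b * match_reward \<alpha> q n) + (1 - q') * pairing_reward \<alpha> b q q' n r (Suc m))"

text \<open>Expected REFORM/RPTSC reward of agent a_i with at most k pairings
  (the model is stated for q_{y_i} > 0).\<close>
definition reform_expected_reward ::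
  "real \<Rightarrow> (real \<Rightarrow> real) \<Rightarrow> real \<Rightarrow> ('a \<Rightarrow> real) \<Rightarrow> ('a \<Rightarrow> 'a \<Rightarrow> real) \<Rightarrow> 'a \<Rightarrow> 'a
     \<Rightarrow> nat \<Rightarrow> real \<Rightarrow> nat \<Rightarrow> real" where
  "reform_expected_reward \<alpha> \<beta> t Qp Qpi x y n r k =
     pairing_reward \<alpha> (\<beta> t) (Qp y) (Qpi y x) n r k"

end

theory Submission
  imports Defs
begin

text \<open>With probability \<open>r\<close> the first of two pairings is not final, and then the expected
  reward is \<open>q' M' + (1 - q') E'\<close> instead of \<open>E'\<close>; the gain over a single pairing is thus
  \<open>r q' (M' - E')\<close>, and \<open>M' - E' = \<alpha> (1 - q') / q \<cdot> (1 - (1 - q)^(n-1))\<close>.\<close>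

lemma pairing_reward_two_eq:
  "pairing_reward \<alpha> b q q' n r 2 =
     b * (single_pairing_reward \<alpha> q q' n
          + r * q' * (match_reward \<alpha> q n - single_pairing_reward \<alpha> q q' n))"
  by (simp add: numeral_2_eq_2 algebra_simps)

lemma match_reward_minus_single_pairing_reward:
  assumes "q \<noteq> 0"
  shows "match_reward \<alpha> q n - single_pairing_reward \<alpha> q q' n
           = \<alpha> * ((1 - q') / q) * (1 - (1 - q) ^ (n - 1))"
  using assms by (simp add: match_reward_def single_pairing_reward_def field_simps)

lemma pairing_reward_two:
  assumes "q \<noteq> 0"
  shows "pairing_reward \<alpha> b q q' n r 2 =
           \<alpha> * b * (q' / q - 1 + r * (1 - q') * (q' / q)) * (1 - (1 - q) ^ (n - 1))"
  unfolding pairing_reward_two_eq match_reward_minus_single_pairing_reward[OF assms]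
  using assms by (simp add: single_pairing_reward_def field_simps)

theorem lemma3:
  fixes \<alpha> :: real and \<beta> :: "real \<Rightarrow> real" and t_i :: real
    and Qp :: "'a::finite \<Rightarrow> real" and Qpi :: "'a \<Rightarrow> 'a \<Rightarrow> real"
    and x_i y_i :: 'a and n :: nat and r :: real
  assumes "n \<ge> 2" and "\<alpha> > 0"
    and "\<And>t. \<beta> t > 0" and "antimono \<beta>"
    and "\<And>y. 0 < Qp y \<and> Qp y < 1" and "(\<Sum>y\<in>UNIV. Qp y) = 1"
    and "\<And>y x. 0 < Qpi y x \<and> Qpi y x < 1" and "\<And>x. (\<Sum>y\<in>UNIV. Qpi y x) = 1"
    and "0 \<le> r" and "r \<le> 1"
  shows "reform_expected_reward \<alpha> \<beta> t_i Qp Qpi x_i y_i n r 2 =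
    (if Qp y_i > 0 then
       \<alpha> * \<beta> t_i * (Qpi y_i x_i / Qp y_i - 1 + r * (1 - Qpi y_i x_i) * (Qpi y_i x_i / Qp y_i))
         * (1 - (1 - Qp y_i) ^ (n - 1))
     else 0)"
proof -
  have "Qp y_i > 0" using assms(5) by blast
  then show ?thesis
    by (simp add: reform_expected_reward_def pairing_reward_two)
qed

end
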